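(* Let $q>1$, $\Omega$ any domain of $\mathbb{R}^N$, $T\in(0,\infty]$, and $u$ a nonnegative classical solution of (E) in $Q_{\Omega,T}$ such that $u(\cdot,t)\to\infty$ uniformly on a ball $B(x_0,\rho)$ with $\overline{B(x_0,\rho)}\subset\Omega$, as $t\to0$. Then $$\liminf_{t\to0}t^{\frac1{q-1}}u(x,t)\ge C(N,q,\rho)>0\quad\forall x\in B(x_0,\rho/2),\qquad \liminf_{t\to0}t^{\frac1{q-1}}u(x_0,t)\ge C_q\rho^{q'},$$ where $q'=q/(q-1)$ and $C_q=\big((q'(1+q'))^q(q-1)\big)^{-\frac1{q-1}}$.
   Context: Equation (E) is $u_t-\Delta u+|\nabla u|^q=0$ in $Q_{\Omega,T}=\Omega\times(0,T)$; a classical solution is $u\in C^{2,1}(Q_{\Omega,T})$ satisfying (E) pointwise. *)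

theory Defs
  imports "HOL-Analysis.Analysis"
begin

definition Qcyl :: "(real^('n::finite)) set \<Rightarrow> ereal \<Rightarrow> ((real^'n) \<times> real) set" where
  "Qcyl \<Omega> T = {(x,t). x \<in> \<Omega> \<and> 0 < t \<and> ereal t < T}"

text \<open>Classical solution of u_t - Laplace u + |grad u|^q = 0 in Q_{Omega,T}:
  u is C^{2,1} in Q (u, its spatial gradient Du, spatial Hessian D2u and time derivative ut
  exist and are jointly continuous in Q) and the equation holds pointwise.\<close>
definition classical_solution_E ::
  "real \<Rightarrow> (real^('n::finite)) set \<Rightarrow> ereal \<Rightarrow> (real^'n \<Rightarrow> real \<Rightarrow> real) \<Rightarrow> bool" where
  "classical_solution_E q \<Omega> T u \<longleftrightarrow>
     (\<exists>(Du :: real^'n \<Rightarrow> real \<Rightarrow> real^'n) (D2u :: real^'n \<Rightarrow> real \<Rightarrow> real^'n^'n)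
        (ut :: real^'n \<Rightarrow> real \<Rightarrow> real).
       (\<forall>(x,t) \<in> Qcyl \<Omega> T.
          ((\<lambda>y. u y t) has_derivative (\<lambda>h. Du x t \<bullet> h)) (at x) \<and>
          ((\<lambda>y. Du y t) has_derivative (\<lambda>h. D2u x t *v h)) (at x) \<and>
          ((\<lambda>s. u x s) has_real_derivative ut x t) (at t) \<and>
          ut x t - (\<Sum>i\<in>UNIV. D2u x t $ i $ i) + norm (Du x t) powr q = 0) \<and>
       continuous_on (Qcyl \<Omega> T) (\<lambda>(x,t). u x t) \<and>
       continuous_on (Qcyl \<Omega> T) (\<lambda>(x,t). Du x t) \<and>
       continuous_on (Qcyl \<Omega> T) (\<lambda>(x,t). D2u x t) \<and>
       continuous_on (Qcyl \<Omega> T) (\<lambda>(x,t). ut x t))"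

end

theory Submission
  imports Defs
begin

(* Idea: with b = q/(q-1), p = 1/(q-1) and the cap  G(y) = \<rho>^2 - |y - x0|^2,  the function
     W(y,t) = (t + a)^(-p) * A * G(y)^b
   is a subsolution of the equation on B(x0,\<rho>) for 0 < t + a \<le> \<Theta>, provided the
   amplitude A is small (A^(q-1) (2b)^q \<rho>^q < p, "admissible") and \<Theta> is a
   suitable lifetime depending on q, \<rho>, A and the dimension.  It vanishes on the sphere.
   A maximum-principle argument (perturbed by \<epsilon>(t - \<tau>) and using only first and
   second order conditions at a maximum point) compares W with u on the cylinder
   cball x0 \<rho> \<times> [\<tau>, t2].  Since u(\<cdot>,\<tau>) is uniformly huge for small \<tau>, the
   comparison can be started with the shift a = s - \<tau>; letting \<tau> \<rightarrow> 0 and then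
   s \<rightarrow> 0 gives  t^p u(x,t) \<ge> A G(x)^b  for small t.  Choosing the optimal amplitude
   A = C_q \<rho>^(-b) yields both bounds of the theorem: on B(x0,\<rho>/2) we have
   G \<ge> 3\<rho>^2/4, and at the centre A G(x0)^b = C_q \<rho>^b. *)

lemma interior_max_derivatives:
  fixes f f' :: "real \<Rightarrow> real"
  assumes d: "d > 0"
    and max: "\<And>s. \<bar>s\<bar> < d \<Longrightarrow> f s \<le> f 0"
    and der: "\<And>s. \<bar>s\<bar> < d \<Longrightarrow> (f has_real_derivative f' s) (at s)"
    and der2: "(f' has_real_derivative L) (at 0)"
  shows "f' 0 = 0" and "L \<le> 0"
proof -
  show f'0: "f' 0 = 0"
    by (rule DERIV_local_max[OF der[of 0] d]) (use d max in auto)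
  show "L \<le> 0"
  proof (rule ccontr)
    assume "\<not> L \<le> 0"
    then obtain e where e: "e > 0" "\<And>h. h > 0 \<Longrightarrow> h < e \<Longrightarrow> f' 0 < f' (0 + h)"
      using DERIV_pos_inc_right[OF der2] by force
    define h where "h = min e d / 2"
    have h: "h > 0" "h < e" "h < d" using e d by (auto simp: h_def)
    obtain z where z: "0 < z" "z < h" "f h - f 0 = (h - 0) * f' z"
      using MVT2[of 0 h f f'] h der by force
    have "f' z > 0" using e(2)[of z] z h f'0 by auto
    then have "f h > f 0" using z h by (simp add: algebra_simps)
    with max[of h] h show False by auto
  qed
qed

lemma left_max_derivative_nonneg:
  fixes f :: "real \<Rightarrow> real"
  assumes d: "d > 0" and max: "\<And>s. t - d < s \<Longrightarrow> s < t \<Longrightarrow> f s \<le> f t"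
    and der: "(f has_real_derivative L) (at t)"
  shows "L \<ge> 0"
proof (rule ccontr)
  assume "\<not> L \<ge> 0"
  then obtain e where e: "e > 0" "\<And>h. h > 0 \<Longrightarrow> h < e \<Longrightarrow> f t < f (t - h)"
    using DERIV_neg_dec_left[OF der] by force
  define h where "h = min e d / 2"
  have h: "h > 0" "h < e" "h < d" using e d by (auto simp: h_def)
  then show False using e(2)[of h] max[of "t - h"] by auto
qed

lemma coordinate_line_derivative:
  fixes v :: "real^'n \<Rightarrow> real"
  assumes "(v has_derivative (\<lambda>h. D \<bullet> h)) (at (x + s *\<^sub>R axis i 1))"
  shows "((\<lambda>s. v (x + s *\<^sub>R axis i 1)) has_real_derivative D $ i) (at s)"
proof -
  have line: "((\<lambda>s. x + s *\<^sub>R axis i (1::real)) has_derivative (\<lambda>h. h *\<^sub>R axis i 1)) (at s)"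
    by (auto intro!: derivative_eq_intros)
  have "(v \<circ> (\<lambda>s. x + s *\<^sub>R axis i 1) has_derivative (\<lambda>h. D \<bullet> h) \<circ> (\<lambda>h. h *\<^sub>R axis i 1)) (at s)"
    by (rule diff_chain_at[OF line assms])
  moreover have "(\<lambda>h. D \<bullet> h) \<circ> (\<lambda>h. h *\<^sub>R axis i 1) = (*) (D $ i)"
    by (auto simp: inner_axis)
  ultimately show ?thesis by (simp add: has_field_derivative_def comp_def)
qed

lemma coordinate_line_derivative_diag:
  fixes F :: "real^'n \<Rightarrow> real^'n"
  assumes "(F has_derivative (\<lambda>h. M *v h)) (at x)"
  shows "((\<lambda>s. F (x + s *\<^sub>R axis i 1) $ i) has_real_derivative M $ i $ i) (at 0)"
proof -
  have line: "((\<lambda>s. x + s *\<^sub>R axis i (1::real)) has_derivative (\<lambda>h. h *\<^sub>R axis i 1)) (at 0)"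
    by (auto intro!: derivative_eq_intros)
  have "(F \<circ> (\<lambda>s. x + s *\<^sub>R axis i 1) has_derivative (\<lambda>h. M *v h) \<circ> (\<lambda>h. h *\<^sub>R axis i 1)) (at 0)"
    by (rule diff_chain_at[OF line]) (use assms in simp)
  then have "((\<lambda>s. (F \<circ> (\<lambda>s. x + s *\<^sub>R axis i 1)) s $ i)
      has_derivative (\<lambda>h. ((\<lambda>h. M *v h) \<circ> (\<lambda>h. h *\<^sub>R axis i 1)) h $ i)) (at 0)"
    by (rule bounded_linear.has_derivative[OF bounded_linear_vec_nth])
  moreover have "(\<lambda>h. ((\<lambda>h. M *v h) \<circ> (\<lambda>h. h *\<^sub>R axis i 1)) h $ i) = (*) (M $ i $ i)"
    by (auto simp: matrix_vector_mult_scaleR matrix_vector_mult_basis column_def mult.commute)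
  ultimately show ?thesis by (simp add: has_field_derivative_def comp_def)
qed

lemma norm_add_axis_sq:
  fixes h :: "real^'n"
  shows "(norm (h + s *\<^sub>R axis i 1))\<^sup>2 = (norm h)\<^sup>2 + 2 * s * h $ i + s\<^sup>2"
proof -
  have "(norm (h + s *\<^sub>R axis i 1))\<^sup>2 = (h + s *\<^sub>R axis i 1) \<bullet> (h + s *\<^sub>R axis i 1)"
    by (simp add: power2_norm_eq_inner)
  also have "\<dots> = h \<bullet> h + 2 * s * (h \<bullet> axis i 1) + s\<^sup>2 * (axis i (1::real) \<bullet> axis i 1)"
    by (simp add: inner_add_left inner_add_right inner_commute power2_eq_square algebra_simps)
  also have "\<dots> = (norm h)\<^sup>2 + 2 * s * h $ i + s\<^sup>2"
    by (simp add: inner_axis power2_norm_eq_inner inner_axis_axis)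
  finally show ?thesis .
qed

lemma sum_sq_components: "(\<Sum>i\<in>UNIV. ((h::real^'n) $ i)\<^sup>2) = (norm h)\<^sup>2"
proof -
  have "(norm h)\<^sup>2 = h \<bullet> h" by (simp add: dot_square_norm)
  also have "\<dots> = (\<Sum>i\<in>UNIV. (h $ i)\<^sup>2)" by (simp add: inner_vec_def power2_eq_square)
  finally show ?thesis by simp
qed

definition cap :: "real \<Rightarrow> real^'n \<Rightarrow> real^'n \<Rightarrow> real" where
  "cap \<rho> x0 y = \<rho>\<^sup>2 - (norm (y - x0))\<^sup>2"

definition barrier :: "real \<Rightarrow> real \<Rightarrow> real \<Rightarrow> real^'n \<Rightarrow> real^'n \<Rightarrow> real" where
  "barrier q \<rho> A x0 y = A * cap \<rho> x0 y powr (q/(q-1))"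

definition barrier_grad :: "real \<Rightarrow> real \<Rightarrow> real \<Rightarrow> real^'n \<Rightarrow> real^'n \<Rightarrow> real^'n" where
  "barrier_grad q \<rho> A x0 y = (-2 * A * (q/(q-1)) * cap \<rho> x0 y powr (q/(q-1) - 1)) *\<^sub>R (y - x0)"

definition barrier_hess_diag :: "real \<Rightarrow> real \<Rightarrow> real \<Rightarrow> real^'n \<Rightarrow> real^'n \<Rightarrow> 'n \<Rightarrow> real" where
  "barrier_hess_diag q \<rho> A x0 y i =
     4 * A * (q/(q-1)) * (q/(q-1) - 1) * cap \<rho> x0 y powr (q/(q-1) - 2) * ((y - x0) $ i)\<^sup>2
     - 2 * A * (q/(q-1)) * cap \<rho> x0 y powr (q/(q-1) - 1)"

lemma cap_line: "cap \<rho> x0 (x + s *\<^sub>R axis i 1) = cap \<rho> x0 x - 2 * s * (x - x0) $ i - s\<^sup>2"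
proof -
  have "x + s *\<^sub>R axis i 1 - x0 = (x - x0) + s *\<^sub>R axis i 1" by simp
  then show ?thesis unfolding cap_def using norm_add_axis_sq[of "x - x0" s i] by (simp add: algebra_simps)
qed

lemma cap_pos: "dist x0 x < \<rho> \<Longrightarrow> cap \<rho> x0 x > 0"
  unfolding cap_def dist_norm by (simp add: norm_minus_commute power_strict_mono)

lemma cap_nonneg: "x \<in> cball x0 \<rho> \<Longrightarrow> 0 \<le> cap \<rho> x0 x"
  by (auto simp: cap_def dist_norm norm_minus_commute intro!: power_mono)

lemma cap_le: "cap \<rho> x0 x \<le> \<rho>\<^sup>2"
  by (simp add: cap_def)

lemma barrier_sphere: "dist x0 x = \<rho> \<Longrightarrow> barrier q \<rho> A x0 x = 0"
  unfolding barrier_def cap_def dist_norm by (simp add: norm_minus_commute)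

lemma barrier_nonneg: "A \<ge> 0 \<Longrightarrow> barrier q \<rho> A x0 x \<ge> 0"
  by (simp add: barrier_def)

lemma barrier_continuous:
  assumes "q > 1" shows "continuous_on (cball x0 \<rho>) (barrier q \<rho> A x0)"
proof -
  have "continuous_on (cball x0 \<rho>) (\<lambda>y. A * cap \<rho> x0 y powr (q/(q-1)))"
  proof (intro continuous_on_mult[OF continuous_on_const] continuous_on_powr'[OF _ continuous_on_const])
    show "continuous_on (cball x0 \<rho>) (cap \<rho> x0)" unfolding cap_def by (intro continuous_intros)
    show "\<forall>y\<in>cball x0 \<rho>. 0 \<le> cap \<rho> x0 y \<and> (cap \<rho> x0 y = 0 \<longrightarrow> 0 < q/(q-1))"
      using assms cap_nonneg by auto
  qed
  then show ?thesis by (simp add: barrier_def[abs_def])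
qed

lemma barrier_line_derivative:
  assumes "cap \<rho> x0 (x + s *\<^sub>R axis i 1) > 0"
  shows "((\<lambda>s. barrier q \<rho> A x0 (x + s *\<^sub>R axis i 1)) has_real_derivative
           barrier_grad q \<rho> A x0 (x + s *\<^sub>R axis i 1) $ i) (at s)"
proof -
  define c h b where "c = cap \<rho> x0 x" and "h = (x - x0) $ i" and "b = q/(q-1)"
  have eq: "(\<lambda>s. barrier q \<rho> A x0 (x + s *\<^sub>R axis i 1)) = (\<lambda>s. A * (c - 2 * s * h - s\<^sup>2) powr b)"
    by (simp add: barrier_def cap_line c_def h_def b_def)
  have pos: "c - 2 * s * h - s\<^sup>2 > 0" using assms by (simp add: cap_line c_def h_def)
  have "((\<lambda>s. A * (c - 2 * s * h - s\<^sup>2) powr b) has_real_derivative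
          A * (b * (c - 2 * s * h - s\<^sup>2) powr (b - 1) * (- 2 * h - 2 * s))) (at s)"
    by (rule derivative_eq_intros refl | use pos in simp)+
  moreover have comp: "(x + s *\<^sub>R axis i 1 - x0) $ i = h + s" by (simp add: h_def)
  moreover have "barrier_grad q \<rho> A x0 (x + s *\<^sub>R axis i 1) $ i
      = A * (b * (c - 2 * s * h - s\<^sup>2) powr (b - 1) * (- 2 * h - 2 * s))"
    unfolding barrier_grad_def vector_scaleR_component comp cap_line b_def[symmetric]
      c_def[symmetric] h_def[symmetric] real_scaleR_def
    by (simp add: algebra_simps)
  ultimately show ?thesis using eq by simp
qed

lemma barrier_grad_line_derivative:
  assumes "cap \<rho> x0 x > 0"
  shows "((\<lambda>s. barrier_grad q \<rho> A x0 (x + s *\<^sub>R axis i 1) $ i) has_real_derivative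
           barrier_hess_diag q \<rho> A x0 x i) (at 0)"
proof -
  define c h b where "c = cap \<rho> x0 x" and "h = (x - x0) $ i" and "b = q/(q-1)"
  have comp: "\<And>s. (x + s *\<^sub>R axis i 1 - x0) $ i = h + s" by (simp add: h_def)
  have eq: "(\<lambda>s. barrier_grad q \<rho> A x0 (x + s *\<^sub>R axis i 1) $ i)
      = (\<lambda>s. -2 * A * b * (c - 2 * s * h - s\<^sup>2) powr (b - 1) * (h + s))"
    unfolding barrier_grad_def vector_scaleR_component comp cap_line b_def[symmetric]
      c_def[symmetric] h_def[symmetric] real_scaleR_def
    by simp
  have pos: "c - 2 * 0 * h - 0\<^sup>2 > 0" using assms by (simp add: c_def)
  have "((\<lambda>s. -2 * A * b * (c - 2 * s * h - s\<^sup>2) powr (b - 1) * (h + s)) has_real_derivative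
          -2 * A * b * ((b - 1) * (c - 2 * 0 * h - 0\<^sup>2) powr (b - 1 - 1) * (- 2 * h - 2 * 0)) * (h + 0)
          + -2 * A * b * (c - 2 * 0 * h - 0\<^sup>2) powr (b - 1) * 1) (at 0)"
    by (rule derivative_eq_intros refl | use pos in simp)+
  moreover have "b - 1 - 1 = b - 2" by simp
  then have "barrier_hess_diag q \<rho> A x0 x i
      = -2 * A * b * ((b - 1) * (c - 2 * 0 * h - 0\<^sup>2) powr (b - 1 - 1) * (- 2 * h - 2 * 0)) * (h + 0)
        + -2 * A * b * (c - 2 * 0 * h - 0\<^sup>2) powr (b - 1) * 1"
    unfolding barrier_hess_diag_def b_def[symmetric] c_def[symmetric] h_def[symmetric]
    by (simp add: power2_eq_square algebra_simps)
  ultimately show ?thesis using eq by simp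
qed

lemma touching_from_above:
  fixes v :: "real^'n \<Rightarrow> real" and Dv :: "real^'n \<Rightarrow> real^'n"
  assumes d: "d > 0" "ball x d \<subseteq> ball x0 \<rho>"
    and dv: "\<And>y. y \<in> ball x d \<Longrightarrow> (v has_derivative (\<lambda>h. Dv y \<bullet> h)) (at y)"
    and d2v: "(Dv has_derivative (\<lambda>h. H *v h)) (at x)"
    and max: "\<And>y. y \<in> ball x d \<Longrightarrow> c * barrier q \<rho> A x0 y - v y \<le> c * barrier q \<rho> A x0 x - v x"
  shows "Dv x = c *\<^sub>R barrier_grad q \<rho> A x0 x"
    and "c * (\<Sum>i\<in>UNIV. barrier_hess_diag q \<rho> A x0 x i) \<le> (\<Sum>i\<in>UNIV. H $ i $ i)"
proof -
  have line_in_ball: "x + s *\<^sub>R axis i 1 \<in> ball x d" if "\<bar>s\<bar> < d" for s i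
    using that by (simp add: dist_norm)
  have line_cap: "cap \<rho> x0 (x + s *\<^sub>R axis i 1) > 0" if "\<bar>s\<bar> < d" for s i
    using d(2) line_in_ball[OF that, of i] by (meson cap_pos mem_ball subsetD)
  have center_cap: "cap \<rho> x0 x > 0"
    using line_cap[of 0] d(1) by simp
  have coord: "c * barrier_grad q \<rho> A x0 x $ i = Dv x $ i
      \<and> c * barrier_hess_diag q \<rho> A x0 x i \<le> H $ i $ i" for i
  proof -
    define f where "f = (\<lambda>s. c * barrier q \<rho> A x0 (x + s *\<^sub>R axis i 1) - v (x + s *\<^sub>R axis i 1))"
    define f' where "f' = (\<lambda>s. c * barrier_grad q \<rho> A x0 (x + s *\<^sub>R axis i 1) $ i
                                - Dv (x + s *\<^sub>R axis i 1) $ i)"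
    have max_line: "f s \<le> f 0" if "\<bar>s\<bar> < d" for s
      using max[OF line_in_ball[OF that]] by (simp add: f_def)
    have der: "(f has_real_derivative f' s) (at s)" if "\<bar>s\<bar> < d" for s
      unfolding f_def f'_def
      by (intro DERIV_diff DERIV_cmult barrier_line_derivative line_cap[OF that]
          coordinate_line_derivative dv line_in_ball[OF that])
    have der2: "(f' has_real_derivative c * barrier_hess_diag q \<rho> A x0 x i - H $ i $ i) (at 0)"
      unfolding f'_def
      by (intro DERIV_diff DERIV_cmult barrier_grad_line_derivative center_cap
          coordinate_line_derivative_diag d2v)
    show ?thesis
      using interior_max_derivatives[OF d(1) max_line der der2] by (simp add: f'_def)
  qed
  show "Dv x = c *\<^sub>R barrier_grad q \<rho> A x0 x"
    using coord by (simp add: vec_eq_iff)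
  show "c * (\<Sum>i\<in>UNIV. barrier_hess_diag q \<rho> A x0 x i) \<le> (\<Sum>i\<in>UNIV. H $ i $ i)"
    unfolding sum_distrib_left by (intro sum_mono) (use coord in blast)
qed

(* Smallness of the amplitude: the gradient term |\<nabla>(A G^b)|^q \<le> A (2b)^q A^(q-1) \<rho>^q G^b
   must be dominated by the decay term p A G^b. *)
definition admissible :: "real \<Rightarrow> real \<Rightarrow> real \<Rightarrow> bool" where
  "admissible q \<rho> A \<longleftrightarrow> A > 0 \<and> A powr (q-1) * (2 * (q/(q-1))) powr q * \<rho> powr q < 1/(q-1)"

(* Time span \<Theta> = \<kappa> c \<rho>^2 / D^2 on which the moving barrier stays a subsolution;
   here \<kappa> is the slack in admissibility, c = 4b(b-1) and D = 2Nb + c. *)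
definition barrier_lifetime :: "real \<Rightarrow> real \<Rightarrow> real \<Rightarrow> real \<Rightarrow> real" where
  "barrier_lifetime q \<rho> A N =
     (let b = q/(q-1); \<kappa> = 1/(q-1) - A powr (q-1) * (2*b) powr q * \<rho> powr q;
          c = 4*b*(b-1); D = 2*N*b + c
      in \<kappa> * c * \<rho>\<^sup>2 / D\<^sup>2)"

lemma barrier_lifetime_pos:
  assumes "q > 1" "\<rho> > 0" "admissible q \<rho> A" "N \<ge> 0"
  shows "barrier_lifetime q \<rho> A N > 0"
proof -
  define b where "b = q/(q-1)"
  have b: "b > 0" "b - 1 > 0" using assms(1) by (auto simp: b_def field_simps)
  then have c: "4*b*(b-1) > 0" by simp
  have "2 * N * b + 4*b*(b-1) > 0" using c b assms(4) by (simp add: add_nonneg_pos)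
  then show ?thesis using b c assms(2,3)
    unfolding barrier_lifetime_def Let_def admissible_def b_def[symmetric]
    by (intro divide_pos_pos mult_pos_pos) auto
qed

(* Elementary inequality controlling the Laplacian term of the barrier by the slack
   \<kappa>, split according to the size of G. *)
lemma quadratic_estimate:
  fixes \<kappa> c D G \<theta> \<rho> :: real
  assumes "\<kappa> > 0" "c > 0" "D \<ge> c" "G > 0" "G \<le> \<rho>\<^sup>2" "\<theta> > 0" "\<theta> \<le> \<kappa>*c*\<rho>\<^sup>2/D\<^sup>2"
  shows "- \<kappa>*G\<^sup>2 - \<theta>*c*(\<rho>\<^sup>2 - G) + (D - c)*\<theta>*G \<le> 0"
proof -
  have Dp: "D > 0" using assms by simp
  show ?thesis
  proof (cases "G \<le> c*\<rho>\<^sup>2/D")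
    case True
    then have "D*G \<le> c*\<rho>\<^sup>2" using Dp by (simp add: field_simps)
    then have "\<theta>*(D*G) \<le> \<theta>*(c*\<rho>\<^sup>2)" using assms by (intro mult_left_mono) auto
    moreover have "\<kappa>*G\<^sup>2 \<ge> 0" using assms by simp
    ultimately show ?thesis by (simp add: algebra_simps)
  next
    case False
    then have g: "G*D > c*\<rho>\<^sup>2" using Dp by (simp add: field_simps)
    have "\<theta>*D\<^sup>2 \<le> \<kappa>*c*\<rho>\<^sup>2" using assms(7) Dp by (simp add: field_simps)
    also have "\<dots> \<le> \<kappa>*(G*D)" using g assms by simp
    finally have "\<theta>*D*D \<le> \<kappa>*G*D" by (simp add: power2_eq_square algebra_simps)
    then have "\<theta>*D \<le> \<kappa>*G" using Dp by simp
    then have "\<theta>*D*G \<le> \<kappa>*G*G" using assms by (intro mult_right_mono) auto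
    moreover have "\<theta>*c*\<rho>\<^sup>2 \<ge> 0" using assms by simp
    ultimately show ?thesis by (simp add: power2_eq_square algebra_simps)
  qed
qed

(* The subsolution inequality for the barrier written in the radial variables
   G = cap and r = |y - x0|, with r^2 = \<rho>^2 - G. *)
lemma radial_barrier_inequality:
  fixes A b p q \<kappa> \<theta> G r \<rho> N c D :: real
  assumes q: "q > 1" and A: "A > 0" and b: "b = q/(q-1)" and p: "p = 1/(q-1)"
    and \<kappa>: "\<kappa> = p - A powr (q-1) * (2*b) powr q * \<rho> powr q" "\<kappa> > 0"
    and G: "G > 0" and r: "r \<ge> 0" "r\<^sup>2 = \<rho>\<^sup>2 - G" and \<rho>: "\<rho> > 0"
    and \<theta>: "\<theta> > 0" "\<theta> \<le> \<kappa>*c*\<rho>\<^sup>2/D\<^sup>2" and c: "c = 4*b*(b-1)" and D: "D = 2*N*b + c"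
    and N: "N \<ge> 0"
  shows "-p*(A*G powr b) + (2*A*b*G powr (b-1)*r) powr q
          - \<theta>*(4*A*b*(b-1)*G powr (b-2)*r\<^sup>2 - 2*N*A*b*G powr (b-1)) \<le> 0"
proof -
  have b1: "b - 1 = p" using q by (simp add: b p field_simps)
  have pp: "p > 0" using q by (simp add: p)
  have bpos: "b > 0" using b1 pp by simp
  have cpos: "c > 0" using bpos pp b1 by (simp add: c)
  have Dc: "D \<ge> c" using N bpos by (simp add: D)
  define P where "P = G powr b"
  have Ppos: "P > 0" using G by (simp add: P_def)
  have G1: "G powr (b-1) = P / G" using G by (simp add: P_def powr_diff)
  have G2: "G powr (b-2) = P / G\<^sup>2" using G by (simp add: P_def powr_diff powr_numeral)
  have pq: "(b-1)*q = b" using q by (simp add: b field_simps)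
  define K where "K = A powr (q-1) * (2*b) powr q"
  have Kpos: "K \<ge> 0" by (simp add: K_def)
  have "r \<le> \<rho>" using r G \<rho> by (smt (verit) power_mono)
  then have R: "r powr q \<le> \<rho> powr q" using r q by (intro powr_mono2) auto
  have grad_term: "(2*A*b*G powr (b-1)*r) powr q = A * K * P * r powr q"
  proof -
    have "(2*A*b*G powr (b-1)*r) powr q = (A * (2*b) * G powr (b-1) * r) powr q"
      by (simp add: algebra_simps)
    also have "\<dots> = A powr q * (2*b) powr q * (G powr (b-1)) powr q * r powr q"
      using A bpos G r by (simp add: powr_mult)
    also have "(G powr (b-1)) powr q = P" using pq by (simp add: powr_powr P_def)
    also have "A powr q = A * A powr (q-1)" using A by (simp add: powr_diff)
    finally show ?thesis by (simp add: K_def algebra_simps)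
  qed
  have KR: "K * r powr q \<le> p - \<kappa>" using R Kpos by (simp add: \<kappa> K_def[symmetric] mult_left_mono)
  have quad: "- \<kappa>*G\<^sup>2 - \<theta>*c*(\<rho>\<^sup>2 - G) + (D - c)*\<theta>*G \<le> 0"
    using quadratic_estimate[OF \<kappa>(2) cpos Dc G _ \<theta>] r zero_le_power2[of r] by simp
  have factor: "-p*(A*G powr b) + (2*A*b*G powr (b-1)*r) powr q
          - \<theta>*(4*A*b*(b-1)*G powr (b-2)*r\<^sup>2 - 2*N*A*b*G powr (b-1))
        = (A*P/G\<^sup>2) * (G\<^sup>2*(-p + K * r powr q) - \<theta>*c*r\<^sup>2 + (D - c)*\<theta>*G)"
    unfolding grad_term unfolding G1 G2 P_def[symmetric] using G
    by (simp add: c D field_simps power2_eq_square)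
  have "G\<^sup>2*(-p + K * r powr q) \<le> G\<^sup>2 * (-\<kappa>)" using KR by (intro mult_left_mono) auto
  moreover have "\<theta>*c*\<rho>\<^sup>2 = \<theta>*c*G + \<theta>*c*r\<^sup>2" by (simp add: r(2) algebra_simps)
  ultimately have "G\<^sup>2*(-p + K * r powr q) - \<theta>*c*r\<^sup>2 + (D - c)*\<theta>*G \<le> 0"
    using quad by (simp add: algebra_simps)
  moreover have "A*P/G\<^sup>2 > 0" using A Ppos G by simp
  ultimately show ?thesis unfolding factor by (metis less_eq_real_def mult_nonneg_nonpos)
qed

lemma barrier_stationary_inequality:
  fixes x x0 :: "real^'n"
  assumes q: "q > 1" and \<rho>: "\<rho> > 0" and A: "admissible q \<rho> A"
    and G: "cap \<rho> x0 x > 0"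
    and \<theta>: "\<theta> > 0" "\<theta> \<le> barrier_lifetime q \<rho> A (real CARD('n))"
  shows "-(1/(q-1)) * barrier q \<rho> A x0 x + norm (barrier_grad q \<rho> A x0 x) powr q
          - \<theta> * (\<Sum>i\<in>UNIV. barrier_hess_diag q \<rho> A x0 x i) \<le> 0"
proof -
  define b p N Gv r where "b = q/(q-1)" and "p = 1/(q-1)" and "N = real CARD('n)"
    and "Gv = cap \<rho> x0 x" and "r = norm (x - x0)"
  have b1: "b - 1 > 0" using q by (simp add: b_def field_simps)
  have A0: "A > 0" using A by (simp add: admissible_def)
  have grad: "norm (barrier_grad q \<rho> A x0 x) = 2*A*b*Gv powr (b-1)*r"
    using A0 b1 q by (simp add: barrier_grad_def b_def[symmetric] Gv_def[symmetric] r_def abs_mult)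
  have trace: "(\<Sum>i\<in>UNIV. barrier_hess_diag q \<rho> A x0 x i)
      = 4*A*b*(b-1)*Gv powr (b-2)*r\<^sup>2 - 2*N*A*b*Gv powr (b-1)"
  proof -
    define \<alpha> \<beta> where "\<alpha> = 4*A*b*(b-1)*Gv powr (b-2)" and "\<beta> = 2*A*b*Gv powr (b-1)"
    have "\<And>i. barrier_hess_diag q \<rho> A x0 x i = \<alpha> * ((x-x0)$i)\<^sup>2 - \<beta>"
      unfolding barrier_hess_diag_def b_def[symmetric] Gv_def[symmetric] \<alpha>_def \<beta>_def by simp
    then have "(\<Sum>i\<in>UNIV. barrier_hess_diag q \<rho> A x0 x i) = \<alpha> * (\<Sum>i\<in>UNIV. ((x-x0)$i)\<^sup>2) - N * \<beta>"
      by (simp only: sum_subtractf sum_distrib_left[symmetric] sum_constant N_def)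
    also have "\<dots> = \<alpha> * r\<^sup>2 - N * \<beta>" by (simp only: sum_sq_components r_def)
    finally show ?thesis by (simp add: \<alpha>_def \<beta>_def algebra_simps)
  qed
  have "-p*(A*Gv powr b) + (2*A*b*Gv powr (b-1)*r) powr q
          - \<theta>*(4*A*b*(b-1)*Gv powr (b-2)*r\<^sup>2 - 2*N*A*b*Gv powr (b-1)) \<le> 0"
  proof (rule radial_barrier_inequality[OF q A0 b_def p_def refl _ _ _ _ \<rho> \<theta>(1) _ refl refl])
    show "0 < p - A powr (q - 1) * (2 * b) powr q * \<rho> powr q"
      using A by (simp add: admissible_def p_def b_def)
    show "Gv > 0" using G by (simp add: Gv_def)
    show "r \<ge> 0" by (simp add: r_def)
    show "r\<^sup>2 = \<rho>\<^sup>2 - Gv" by (simp add: r_def Gv_def cap_def)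
    show "N \<ge> 0" by (simp add: N_def)
    show "\<theta> \<le> (p - A powr (q - 1) * (2 * b) powr q * \<rho> powr q) * (4 * b * (b - 1)) * \<rho>\<^sup>2 /
      (2 * N * b + 4 * b * (b - 1))\<^sup>2"
      using \<theta>(2) by (simp add: barrier_lifetime_def Let_def b_def p_def N_def)
  qed
  then show ?thesis
    by (simp add: grad trace barrier_def b_def[symmetric] p_def[symmetric] Gv_def[symmetric])
qed

(* Scaling by \<theta>^(-p-1): the moving barrier W = \<theta>^(-p) \<psi> (\<theta> = t + a) satisfies
   W_t - \<Delta>W + |\<nabla>W|^q \<le> 0. *)
lemma barrier_subsolution:
  fixes x x0 :: "real^'n" and q :: real
  defines "p \<equiv> 1/(q-1)"
  assumes q: "q > 1" and \<rho>: "\<rho> > 0" and A: "admissible q \<rho> A"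
    and G: "cap \<rho> x0 x > 0"
    and \<theta>: "\<theta> > 0" "\<theta> \<le> barrier_lifetime q \<rho> A (real CARD('n))"
  shows "-p * \<theta> powr (-p-1) * barrier q \<rho> A x0 x
          - \<theta> powr (-p) * (\<Sum>i\<in>UNIV. barrier_hess_diag q \<rho> A x0 x i)
          + norm (\<theta> powr (-p) *\<^sub>R barrier_grad q \<rho> A x0 x) powr q \<le> 0"
proof -
  have pq: "-p * q = -p - 1" using q by (simp add: p_def field_simps)
  have grad: "norm (\<theta> powr (-p) *\<^sub>R barrier_grad q \<rho> A x0 x) powr q
      = \<theta> powr (-p-1) * norm (barrier_grad q \<rho> A x0 x) powr q"
    using \<theta>(1) pq by (simp add: powr_mult powr_powr)
  have time: "\<theta> powr (-p) = \<theta> powr (-p-1) * \<theta>"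
    using \<theta>(1) by (simp add: powr_diff)
  have "\<theta> powr (-p-1) * (-p * barrier q \<rho> A x0 x + norm (barrier_grad q \<rho> A x0 x) powr q
          - \<theta> * (\<Sum>i\<in>UNIV. barrier_hess_diag q \<rho> A x0 x i)) \<le> 0"
    using barrier_stationary_inequality[OF q \<rho> A G \<theta>] \<theta>(1)
    by (simp add: p_def mult_nonneg_nonpos)
  then show ?thesis unfolding grad unfolding time by (simp add: algebra_simps)
qed

(* Core of the maximum principle: W - u - \<epsilon>(t - \<tau>) cannot attain its maximum at an
   interior point (x,t) with t > \<tau>, since there W_t - \<epsilon> \<ge> u_t = \<Delta>u - |\<nabla>u|^q
   \<ge> \<Delta>W - |\<nabla>W|^q \<ge> W_t. *)
lemma no_interior_max:
  fixes u :: "real^'n \<Rightarrow> real \<Rightarrow> real" and Du :: "real^'n \<Rightarrow> real^'n" and q :: real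
  defines "p \<equiv> 1/(q-1)"
  assumes q: "q > 1" and \<rho>: "\<rho> > 0" and A: "admissible q \<rho> A"
    and d: "d > 0" "ball x d \<subseteq> ball x0 \<rho>"
    and du: "\<And>y. y \<in> ball x d \<Longrightarrow> ((\<lambda>y. u y t) has_derivative (\<lambda>h. Du y \<bullet> h)) (at y)"
    and d2u: "(Du has_derivative (\<lambda>h. H *v h)) (at x)"
    and dt: "((\<lambda>s. u x s) has_real_derivative ut) (at t)"
    and eqn: "ut - (\<Sum>i\<in>UNIV. H $ i $ i) + norm (Du x) powr q = 0"
    and \<theta>: "t + a > 0" "t + a \<le> barrier_lifetime q \<rho> A (real CARD('n))"
    and \<epsilon>: "\<epsilon> > 0" and \<tau>: "\<tau> < t"
    and space_max: "\<And>y. y \<in> ball x d \<Longrightarrow>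
      (t+a) powr (-p) * barrier q \<rho> A x0 y - u y t \<le> (t+a) powr (-p) * barrier q \<rho> A x0 x - u x t"
    and time_max: "\<And>s. \<tau> < s \<Longrightarrow> s < t \<Longrightarrow>
      (s+a) powr (-p) * barrier q \<rho> A x0 x - u x s - \<epsilon>*(s-\<tau>)
        \<le> (t+a) powr (-p) * barrier q \<rho> A x0 x - u x t - \<epsilon>*(t-\<tau>)"
  shows False
proof -
  define \<theta>' where "\<theta>' = t + a"
  have center: "cap \<rho> x0 x > 0"
    using d by (meson cap_pos centre_in_ball mem_ball subsetD)
  have grad: "Du x = \<theta>' powr (-p) *\<^sub>R barrier_grad q \<rho> A x0 x"
    and trace: "\<theta>' powr (-p) * (\<Sum>i\<in>UNIV. barrier_hess_diag q \<rho> A x0 x i) \<le> (\<Sum>i\<in>UNIV. H $ i $ i)"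
    using touching_from_above[OF d du d2u] space_max unfolding \<theta>'_def by blast+
  have time_deriv: "((\<lambda>s. (s+a) powr (-p) * barrier q \<rho> A x0 x - u x s - \<epsilon>*(s-\<tau>)) has_real_derivative
          (-p) * \<theta>' powr (-p-1) * 1 * barrier q \<rho> A x0 x - ut - \<epsilon>*(1-0)) (at t)"
  proof (intro DERIV_diff DERIV_cmult_right dt)
    show "((\<lambda>s. (s+a) powr (-p)) has_real_derivative (-p) * \<theta>' powr (-p-1) * 1) (at t)"
      using \<theta>(1) unfolding \<theta>'_def by (intro derivative_eq_intros refl) (auto simp: algebra_simps)
    show "((\<lambda>s. \<epsilon>*(s-\<tau>)) has_real_derivative \<epsilon>*(1-0)) (at t)"
      by (intro derivative_eq_intros refl) auto
  qed
  have time: "-p * \<theta>' powr (-p-1) * barrier q \<rho> A x0 x - ut - \<epsilon> \<ge> 0"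
    using left_max_derivative_nonneg[of "t - \<tau>" t, OF _ _ time_deriv] time_max \<tau> by simp
  have "-p * \<theta>' powr (-p-1) * barrier q \<rho> A x0 x
          - \<theta>' powr (-p) * (\<Sum>i\<in>UNIV. barrier_hess_diag q \<rho> A x0 x i)
          + norm (\<theta>' powr (-p) *\<^sub>R barrier_grad q \<rho> A x0 x) powr q \<le> 0"
    using barrier_subsolution[OF q \<rho> A center] \<theta> unfolding \<theta>'_def p_def by blast
  then show False using grad trace time eqn \<epsilon> by simp
qed

lemma Qcyl_memI:
  assumes "x \<in> \<Omega>" "0 < t" "t \<le> t2" "ereal t2 < T"
  shows "(x, t) \<in> Qcyl \<Omega> T"
proof -
  have "ereal t < T" using assms(3,4) by (meson ereal_less_eq(3) order.strict_trans1)
  then show ?thesis using assms(1,2) by (simp add: Qcyl_def)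
qed

lemma perturbed_difference_attains_max:
  fixes u :: "real^'n \<Rightarrow> real \<Rightarrow> real" and x0 :: "real^'n" and A \<epsilon> :: real
  assumes q: "q > 1" and \<rho>: "\<rho> > 0" and \<tau>: "\<tau> > 0" "\<tau> \<le> t2" and a: "\<tau> + a > 0"
    and cu: "continuous_on (cball x0 \<rho> \<times> {\<tau>..t2}) (\<lambda>(x,t). u x t)"
  defines "z \<equiv> \<lambda>(x,t). (t+a) powr (-(1/(q-1))) * barrier q \<rho> A x0 x - u x t - \<epsilon>*(t-\<tau>)"
  shows "\<exists>m \<in> cball x0 \<rho> \<times> {\<tau>..t2}. \<forall>y \<in> cball x0 \<rho> \<times> {\<tau>..t2}. z y \<le> z m"
proof (rule continuous_attains_sup)
  show "compact (cball x0 \<rho> \<times> {\<tau>..t2})" "cball x0 \<rho> \<times> {\<tau>..t2} \<noteq> {}"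
    using \<rho> \<tau> by (auto intro!: compact_Times)
  have "continuous_on (cball x0 \<rho> \<times> {\<tau>..t2}) (\<lambda>y. (snd y + a) powr (-(1/(q-1)))
          * barrier q \<rho> A x0 (fst y) - u (fst y) (snd y) - \<epsilon>*(snd y - \<tau>))"
  proof (intro continuous_intros)
    show "continuous_on (cball x0 \<rho> \<times> {\<tau>..t2}) (\<lambda>y. u (fst y) (snd y))"
      using cu by (simp add: split_def)
    show "continuous_on (cball x0 \<rho> \<times> {\<tau>..t2}) (\<lambda>y. barrier q \<rho> A x0 (fst y))"
      by (rule continuous_on_compose2[OF barrier_continuous[OF q] continuous_on_fst]) auto
  qed (use a in auto)
  then show "continuous_on (cball x0 \<rho> \<times> {\<tau>..t2}) z" by (simp add: z_def split_def)
qed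

(* A positive value of the perturbed difference can occur neither on the sphere, where
   the barrier vanishes and u \<ge> 0, nor at the initial time \<tau>, where the barrier is below u. *)
lemma positive_max_is_interior:
  assumes xs: "xs \<in> cball x0 \<rho>" and ts: "\<tau> \<le> ts" and \<epsilon>: "\<epsilon> > 0" and u: "u xs ts \<ge> 0"
    and init: "\<forall>x\<in>cball x0 \<rho>. (\<tau>+a) powr (-(1/(q-1))) * barrier q \<rho> A x0 x \<le> u x \<tau>"
    and pos: "(ts+a) powr (-(1/(q-1))) * barrier q \<rho> A x0 xs - u xs ts - \<epsilon>*(ts-\<tau>) > 0"
  shows "dist x0 xs < \<rho>" and "\<tau> < ts"
proof -
  have "0 \<le> \<epsilon>*(ts-\<tau>)" using ts \<epsilon> by simp
  then show "dist x0 xs < \<rho>"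
    using xs u pos barrier_sphere[of x0 xs \<rho> q A] by force
  show "\<tau> < ts"
  proof (rule ccontr)
    assume "\<not> \<tau> < ts"
    then have "ts = \<tau>" using ts by simp
    then show False using init[rule_format, OF xs] pos by simp
  qed
qed

lemma perturbed_comparison:
  fixes u :: "real^'n \<Rightarrow> real \<Rightarrow> real" and x0 :: "real^'n" and q :: real
  defines "p \<equiv> 1/(q-1)"
  assumes sol: "classical_solution_E q \<Omega> T u"
    and nonneg: "\<forall>(x,t)\<in>Qcyl \<Omega> T. u x t \<ge> 0"
    and sub: "cball x0 \<rho> \<subseteq> \<Omega>"
    and q: "q > 1" and \<rho>: "\<rho> > 0" and A: "admissible q \<rho> A"
    and \<tau>: "\<tau> > 0" "\<tau> \<le> t2" "ereal t2 < T"
    and a: "\<tau> + a > 0" "t2 + a \<le> barrier_lifetime q \<rho> A (real CARD('n))"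
    and init: "\<forall>x\<in>cball x0 \<rho>. (\<tau>+a) powr (-p) * barrier q \<rho> A x0 x \<le> u x \<tau>"
    and \<epsilon>: "\<epsilon> > 0"
  shows "\<forall>x\<in>cball x0 \<rho>. \<forall>t\<in>{\<tau>..t2}.
           (t+a) powr (-p) * barrier q \<rho> A x0 x - u x t - \<epsilon>*(t-\<tau>) \<le> 0"
proof -
  from sol obtain Du D2u ut where
    S: "\<forall>(x,t) \<in> Qcyl \<Omega> T.
          ((\<lambda>y. u y t) has_derivative (\<lambda>h. Du x t \<bullet> h)) (at x) \<and>
          ((\<lambda>y. Du y t) has_derivative (\<lambda>h. D2u x t *v h)) (at x) \<and>
          ((\<lambda>s. u x s) has_real_derivative ut x t) (at t) \<and>
          ut x t - (\<Sum>i\<in>UNIV. D2u x t $ i $ i) + norm (Du x t) powr q = 0"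
    and cu: "continuous_on (Qcyl \<Omega> T) (\<lambda>(x,t). u x t)"
    unfolding classical_solution_E_def by blast
  define K where "K = cball x0 \<rho> \<times> {\<tau>..t2}"
  have KQ: "K \<subseteq> Qcyl \<Omega> T"
    using sub \<tau> Qcyl_memI[of _ \<Omega> _ t2 T] by (auto simp: K_def)
  define z where "z = (\<lambda>(x,t). (t+a) powr (-p) * barrier q \<rho> A x0 x - u x t - \<epsilon>*(t-\<tau>))"
  obtain xs ts where m: "(xs,ts) \<in> K" "\<And>y. y \<in> K \<Longrightarrow> z y \<le> z (xs,ts)"
    using perturbed_difference_attains_max[OF q \<rho> \<tau>(1,2) a(1) continuous_on_subset[OF cu KQ[unfolded K_def]],
        of A \<epsilon>]
    unfolding K_def z_def p_def by fastforce
  have xs: "xs \<in> cball x0 \<rho>" and ts: "\<tau> \<le> ts" "ts \<le> t2" using m(1) by (auto simp: K_def)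
  have mQ: "(xs, ts) \<in> Qcyl \<Omega> T" using KQ m(1) by auto
  have "z (xs,ts) \<le> 0"
  proof (rule ccontr)
    assume zpos: "\<not> z (xs,ts) \<le> 0"
    have inside: "dist x0 xs < \<rho>" and later: "\<tau> < ts"
    proof -
      have u: "u xs ts \<ge> 0" using nonneg mQ by auto
      show "dist x0 xs < \<rho>" "\<tau> < ts"
        using positive_max_is_interior[where u=u, OF xs ts(1) \<epsilon> u init[unfolded p_def]] zpos
        by (auto simp: z_def p_def)
    qed
    obtain d where d: "d > 0" "ball xs d \<subseteq> ball x0 \<rho>"
      using openE[OF open_ball, of xs x0 \<rho>] inside by auto
    have slice: "(y, ts) \<in> K" if "y \<in> ball xs d" for y
      using d(2) that ts by (auto simp: K_def)
    have slice_sol: "((\<lambda>y. u y ts) has_derivative (\<lambda>h. Du y ts \<bullet> h)) (at y)" if "y \<in> ball xs d" for y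
      using S KQ slice[OF that] by blast
    show False
    proof (rule no_interior_max[where u=u and Du="\<lambda>y. Du y ts" and t=ts, OF q \<rho> A d slice_sol])
      show "((\<lambda>y. Du y ts) has_derivative (\<lambda>h. D2u xs ts *v h)) (at xs)"
        and "((\<lambda>s. u xs s) has_real_derivative ut xs ts) (at ts)"
        and "ut xs ts - (\<Sum>i\<in>UNIV. D2u xs ts $ i $ i) + norm (Du xs ts) powr q = 0"
        using S mQ by blast+
      show "ts + a > 0" "ts + a \<le> barrier_lifetime q \<rho> A (real CARD('n))"
        using a ts by auto
      show "(ts+a) powr (-(1/(q-1))) * barrier q \<rho> A x0 y - u y ts
          \<le> (ts+a) powr (-(1/(q-1))) * barrier q \<rho> A x0 xs - u xs ts" if "y \<in> ball xs d" for y
        using m(2)[OF slice[OF that]] by (simp add: z_def p_def)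
      show "(s+a) powr (-(1/(q-1))) * barrier q \<rho> A x0 xs - u xs s - \<epsilon>*(s-\<tau>)
          \<le> (ts+a) powr (-(1/(q-1))) * barrier q \<rho> A x0 xs - u xs ts - \<epsilon>*(ts-\<tau>)"
        if "\<tau> < s" "s < ts" for s
        using m(2)[of "(xs,s)"] that xs ts by (simp add: z_def p_def K_def)
    qed (use \<epsilon> later in auto)
  qed
  then show ?thesis using m(2) by (fastforce simp: z_def K_def)
qed

(* Comparison principle: a moving barrier lying below u at time \<tau> stays below u
   up to time t2 (let \<epsilon> \<rightarrow> 0). *)
lemma comparison:
  fixes u :: "real^'n \<Rightarrow> real \<Rightarrow> real" and x0 :: "real^'n" and q :: real
  defines "p \<equiv> 1/(q-1)"
  assumes sol: "classical_solution_E q \<Omega> T u"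
    and nonneg: "\<forall>(x,t)\<in>Qcyl \<Omega> T. u x t \<ge> 0"
    and sub: "cball x0 \<rho> \<subseteq> \<Omega>"
    and q: "q > 1" and \<rho>: "\<rho> > 0" and A: "admissible q \<rho> A"
    and \<tau>: "\<tau> > 0" "\<tau> \<le> t2" "ereal t2 < T"
    and a: "\<tau> + a > 0" "t2 + a \<le> barrier_lifetime q \<rho> A (real CARD('n))"
    and init: "\<forall>x\<in>cball x0 \<rho>. (\<tau>+a) powr (-p) * barrier q \<rho> A x0 x \<le> u x \<tau>"
    and x: "x \<in> cball x0 \<rho>" and t: "t \<in> {\<tau>..t2}"
  shows "(t+a) powr (-p) * barrier q \<rho> A x0 x \<le> u x t"
proof (rule field_le_epsilon)
  fix e :: real assume e: "e > 0"
  define \<epsilon> where "\<epsilon> = e / (t2 - \<tau> + 1)"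
  have \<epsilon>: "\<epsilon> > 0" using e \<tau> by (simp add: \<epsilon>_def)
  have "(t+a) powr (-p) * barrier q \<rho> A x0 x - u x t - \<epsilon>*(t-\<tau>) \<le> 0"
    using perturbed_comparison[OF sol nonneg sub q \<rho> A \<tau> a init[unfolded p_def] \<epsilon>] x t
    by (simp add: p_def)
  moreover have "\<epsilon>*(t-\<tau>) \<le> e"
  proof -
    have "\<epsilon>*(t-\<tau>) \<le> \<epsilon>*(t2-\<tau>+1)" using \<epsilon> t by (intro mult_left_mono) auto
    also have "\<dots> = e" using \<tau> by (simp add: \<epsilon>_def)
    finally show ?thesis .
  qed
  ultimately show "(t+a) powr (-p) * barrier q \<rho> A x0 x \<le> u x t + e" by simp
qed

lemma barrier_le_max:
  assumes "q > 1" "A \<ge> 0" "y \<in> cball x0 \<rho>"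
  shows "barrier q \<rho> A x0 y \<le> A * (\<rho>\<^sup>2) powr (q/(q-1))"
proof -
  have "cap \<rho> x0 y powr (q/(q-1)) \<le> (\<rho>\<^sup>2) powr (q/(q-1))"
    using assms(1) cap_nonneg[OF assms(3)] cap_le[of \<rho> x0 y] by (intro powr_mono2) auto
  then show ?thesis unfolding barrier_def using assms(2) by (rule mult_left_mono)
qed

(* Start the comparison at a time \<tau> so small that u(\<cdot>,\<tau>) exceeds s^(-p) max \<psi> on
   the ball; the barrier shifted by a = s - \<tau> then gives (t + s)^(-p) \<psi>(x) \<le> u(x,t). *)
lemma shifted_barrier_bound:
  fixes u :: "real^'n \<Rightarrow> real \<Rightarrow> real" and x0 :: "real^'n" and q \<rho> A :: real
  defines "p \<equiv> 1/(q-1)" and "\<Theta> \<equiv> barrier_lifetime q \<rho> A (real CARD('n))"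
  assumes sol: "classical_solution_E q \<Omega> T u"
    and nonneg: "\<forall>(x,t)\<in>Qcyl \<Omega> T. u x t \<ge> 0"
    and sub: "cball x0 \<rho> \<subseteq> \<Omega>"
    and q: "q > 1" and \<rho>: "\<rho> > 0" and A: "admissible q \<rho> A"
    and blow: "\<forall>M. eventually (\<lambda>t. \<forall>x \<in> ball x0 \<rho>. u x t \<ge> M) (at_right 0)"
    and t2: "ereal t2 < T" "t2 \<le> \<Theta>/2"
    and s: "0 < s" "s \<le> \<Theta>/2"
    and x: "x \<in> cball x0 \<rho>" and t: "0 < t" "t \<le> t2"
  shows "(t+s) powr (-p) * barrier q \<rho> A x0 x \<le> u x t"
proof -
  have A0: "A \<ge> 0" using A by (simp add: admissible_def)
  define P where "P = A * (\<rho>\<^sup>2) powr (q/(q-1))"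
  obtain d where d: "d > 0" "\<And>\<tau>. 0 < \<tau> \<Longrightarrow> \<tau> < d \<Longrightarrow> \<forall>y\<in>ball x0 \<rho>. u y \<tau> \<ge> s powr (-p) * P"
    using blow[rule_format, of "s powr (-p) * P"] unfolding eventually_at_right_field by auto
  define \<tau> where "\<tau> = min d t / 2"
  have \<tau>: "\<tau> > 0" "\<tau> < d" "\<tau> < t" using d t by (auto simp: \<tau>_def)
  have init: "\<forall>y\<in>cball x0 \<rho>. (\<tau> + (s - \<tau>)) powr (-p) * barrier q \<rho> A x0 y \<le> u y \<tau>"
  proof
    fix y assume y: "y \<in> cball x0 \<rho>"
    show "(\<tau> + (s - \<tau>)) powr (-p) * barrier q \<rho> A x0 y \<le> u y \<tau>"
    proof (cases "dist x0 y < \<rho>")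
      case True
      have "s powr (-p) * barrier q \<rho> A x0 y \<le> s powr (-p) * P"
        unfolding P_def using barrier_le_max[OF q A0 y] by (intro mult_left_mono) auto
      also have "\<dots> \<le> u y \<tau>" using d(2)[OF \<tau>(1,2)] True by auto
      finally show ?thesis by simp
    next
      case False
      then have "barrier q \<rho> A x0 y = 0" using y by (simp add: barrier_sphere)
      moreover have "(y, \<tau>) \<in> Qcyl \<Omega> T" using y sub \<tau> t t2 by (intro Qcyl_memI) auto
      ultimately show ?thesis using nonneg by auto
    qed
  qed
  have "(t + (s - \<tau>)) powr (-p) * barrier q \<rho> A x0 x \<le> u x t"
    unfolding p_def
  proof (rule comparison[OF sol nonneg sub q \<rho> A \<tau>(1) _ t2(1) _ _ init[unfolded p_def] x])
    show "\<tau> \<le> t2" "t \<in> {\<tau>..t2}" using \<tau> t by auto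
    show "\<tau> + (s - \<tau>) > 0" using s by simp
    show "t2 + (s - \<tau>) \<le> barrier_lifetime q \<rho> A (real CARD('n))"
      using t2(2) s(2) \<tau>(1) unfolding \<Theta>_def by simp
  qed
  moreover have "(t+s) powr (-p) \<le> (t + (s - \<tau>)) powr (-p)"
    using \<tau> s t q by (intro powr_mono2') (auto simp: p_def)
  then have "(t+s) powr (-p) * barrier q \<rho> A x0 x \<le> (t + (s - \<tau>)) powr (-p) * barrier q \<rho> A x0 x"
    by (rule mult_right_mono[OF _ barrier_nonneg[OF A0]])
  ultimately show ?thesis by linarith
qed

lemma positive_time_below:
  assumes T: "T > (0::ereal)" and c: "c > 0"
  shows "\<exists>t2. t2 > 0 \<and> ereal t2 < T \<and> t2 \<le> c"
proof -
  obtain z :: ereal where z: "0 < z" "z < T" using T dense by blast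
  then obtain r where r: "z = ereal r" "r > 0" by (cases z) auto
  have "ereal (min c r) \<le> z" using r by simp
  then have "ereal (min c r) < T" using z(2) by (rule le_less_trans)
  then show ?thesis using r c by (intro exI[of _ "min c r"]) auto
qed

(* Letting s \<rightarrow> 0: for all small t > 0, \<psi>(x) \<le> t^p u(x,t). *)
lemma barrier_lower_bound:
  fixes u :: "real^'n \<Rightarrow> real \<Rightarrow> real" and x0 :: "real^'n" and T :: ereal
  assumes sol: "classical_solution_E q \<Omega> T u"
    and nonneg: "\<forall>(x,t)\<in>Qcyl \<Omega> T. u x t \<ge> 0"
    and sub: "cball x0 \<rho> \<subseteq> \<Omega>"
    and q: "q > 1" and \<rho>: "\<rho> > 0" and A: "admissible q \<rho> A" and T: "T > 0"
    and blow: "\<forall>M. eventually (\<lambda>t. \<forall>x \<in> ball x0 \<rho>. u x t \<ge> M) (at_right 0)"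
    and x: "x \<in> cball x0 \<rho>"
  shows "eventually (\<lambda>t. barrier q \<rho> A x0 x \<le> t powr (1/(q-1)) * u x t) (at_right 0)"
proof -
  define p \<Theta> where "p = 1/(q-1)" and "\<Theta> = barrier_lifetime q \<rho> A (real CARD('n))"
  have \<Theta>: "\<Theta> > 0" unfolding \<Theta>_def using barrier_lifetime_pos[OF q \<rho> A] by simp
  obtain t2 where t2: "t2 > 0" "ereal t2 < T" "t2 \<le> \<Theta>/2"
    using positive_time_below[OF T, of "\<Theta>/2"] \<Theta> by auto
  have bound: "t powr (-p) * barrier q \<rho> A x0 x \<le> u x t" if t: "0 < t" "t \<le> t2" for t
  proof -
    have "((\<lambda>s. (t+s) powr (-p) * barrier q \<rho> A x0 x) \<longlongrightarrow> (t+0) powr (-p) * barrier q \<rho> A x0 x)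
        (at_right 0)"
      using t by (intro tendsto_intros) auto
    moreover have "eventually (\<lambda>s. (t+s) powr (-p) * barrier q \<rho> A x0 x \<le> u x t) (at_right 0)"
      unfolding eventually_at_right_field
    proof (intro exI[of _ "\<Theta>/2"] conjI allI impI)
      show "\<Theta>/2 > 0" using \<Theta> by simp
      fix s :: real assume "0 < s" "s < \<Theta>/2"
      then show "(t+s) powr (-p) * barrier q \<rho> A x0 x \<le> u x t"
        unfolding p_def using t2 t unfolding \<Theta>_def
        by (intro shifted_barrier_bound[OF sol nonneg sub q \<rho> A blow _ _ _ _ x]) auto
    qed
    ultimately have "(t+0) powr (-p) * barrier q \<rho> A x0 x \<le> u x t"
      by (rule tendsto_upperbound) simp
    then show ?thesis by simp
  qed
  show ?thesis unfolding eventually_at_right_field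
  proof (intro exI[of _ t2] conjI allI impI)
    show "t2 > 0" by (rule t2(1))
    fix t :: real assume "0 < t" "t < t2"
    then have "t powr p * (t powr (-p) * barrier q \<rho> A x0 x) \<le> t powr p * u x t"
      using bound by (intro mult_left_mono) auto
    moreover have "t powr p * t powr (-p) = 1" using \<open>t > 0\<close> by (simp add: powr_minus)
    ultimately show "barrier q \<rho> A x0 x \<le> t powr (1/(q-1)) * u x t"
      by (simp add: p_def mult.assoc[symmetric])
  qed
qed

lemma liminf_barrier_bound:
  fixes u :: "real^'n \<Rightarrow> real \<Rightarrow> real" and x0 :: "real^'n" and T :: ereal
  assumes "classical_solution_E q \<Omega> T u" "\<forall>(x,t)\<in>Qcyl \<Omega> T. u x t \<ge> 0" "cball x0 \<rho> \<subseteq> \<Omega>"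
    "q > 1" "\<rho> > 0" "admissible q \<rho> A" "T > 0"
    "\<forall>M. eventually (\<lambda>t. \<forall>x \<in> ball x0 \<rho>. u x t \<ge> M) (at_right 0)"
    "x \<in> cball x0 \<rho>"
  shows "Liminf (at_right 0) (\<lambda>t. ereal (t powr (1/(q-1)) * u x t)) \<ge> ereal (barrier q \<rho> A x0 x)"
  using barrier_lower_bound[OF assms] by (intro Liminf_bounded) simp

definition blowup_constant :: "real \<Rightarrow> real" where
  "blowup_constant q = (((q/(q-1)) * (1 + q/(q-1))) powr q * (q-1)) powr (-(1/(q-1)))"

definition amplitude :: "real \<Rightarrow> real \<Rightarrow> real" where
  "amplitude q \<rho> = blowup_constant q * \<rho> powr (-(q/(q-1)))"

(* With A = C_q \<rho>^(-b) one gets A^(q-1) (2b)^q \<rho>^q = p (2/(1+b))^q < p. *)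
lemma amplitude_admissible:
  assumes q: "q > 1" and \<rho>: "\<rho> > 0"
  shows "admissible q \<rho> (amplitude q \<rho>)"
proof -
  define b p A where "b = q/(q-1)" and "p = 1/(q-1)" and "A = amplitude q \<rho>"
  have bp: "b > 0" "b > 1" and pp: "p > 0" using q by (auto simp: b_def p_def field_simps)
  define Y where "Y = (b * (1 + b)) powr q * (q-1)"
  have Yp: "Y > 0" using bp q by (simp add: Y_def)
  have C: "blowup_constant q = Y powr (-p)" by (simp add: blowup_constant_def Y_def b_def p_def)
  have A0: "A > 0" using Yp \<rho> by (simp add: A_def amplitude_def C)
  have "A powr (q-1) = (Y powr (-p)) powr (q-1) * \<rho> powr (-b*(q-1))"
    using Yp \<rho> by (simp add: A_def amplitude_def C b_def powr_mult powr_powr)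
  also have "(Y powr (-p)) powr (q-1) = Y powr (-p*(q-1))" by (simp add: powr_powr)
  also have "-p*(q-1) = -1" using q by (simp add: p_def)
  also have "-b*(q-1) = -q" using q by (simp add: b_def)
  finally have Ae: "A powr (q-1) = \<rho> powr (-q) / Y" using Yp by (simp add: powr_minus_divide)
  have "(2*b) powr q / Y = ((2*b) powr q / (b*(1+b)) powr q) / (q-1)" by (simp add: Y_def)
  also have "(2*b) powr q / (b*(1+b)) powr q = (2/(1+b)) powr q"
    using bp by (simp add: powr_divide[symmetric])
  finally have "A powr (q-1) * (2*b) powr q * \<rho> powr q = p * (2/(1+b)) powr q"
    using \<rho> by (simp add: Ae p_def powr_minus field_simps)
  moreover have "(2/(1+b)) powr q < 1 powr q"
    using bp q by (intro powr_less_mono2) auto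
  then have "p * (2/(1+b)) powr q < p * 1"
    using pp by (intro mult_strict_left_mono) auto
  ultimately show ?thesis
    using A0 by (simp add: admissible_def A_def b_def p_def)
qed

lemma barrier_center_value:
  assumes "\<rho> > 0"
  shows "barrier q \<rho> (amplitude q \<rho>) x0 x0 = blowup_constant q * \<rho> powr (q/(q-1))"
proof -
  define b where "b = q/(q-1)"
  have "(\<rho>\<^sup>2) powr b = \<rho> powr (2*b)"
    using assms by (simp add: powr_powr[symmetric] powr_numeral)
  moreover have "\<rho> powr (-b) * \<rho> powr (2*b) = \<rho> powr b"
    by (simp add: powr_add[symmetric])
  ultimately show ?thesis
    by (simp add: barrier_def cap_def amplitude_def mult.assoc b_def[symmetric])
qed

lemma barrier_inner_bound:
  assumes "q > 1" "A \<ge> 0" "x \<in> ball x0 (\<rho>/2)"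
  shows "A * (3/4 * \<rho>\<^sup>2) powr (q/(q-1)) \<le> barrier q \<rho> A x0 x"
proof -
  have "(norm (x - x0))\<^sup>2 \<le> (\<rho>/2)\<^sup>2"
    using assms(3) by (intro power_mono) (auto simp: dist_norm norm_minus_commute)
  then have "3/4 * \<rho>\<^sup>2 \<le> cap \<rho> x0 x" by (simp add: cap_def power_divide)
  then have "(3/4 * \<rho>\<^sup>2) powr (q/(q-1)) \<le> cap \<rho> x0 x powr (q/(q-1))"
    using assms(1) by (intro powr_mono2) auto
  then show ?thesis unfolding barrier_def using assms(2) by (rule mult_left_mono)
qed

lemma blowup_rate_bounds:
  fixes u :: "real^'n \<Rightarrow> real \<Rightarrow> real" and x0 :: "real^'n" and T :: ereal
  assumes q: "q > 1" and \<rho>: "\<rho> > 0"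
    and sol: "classical_solution_E q \<Omega> T u" and nonneg: "\<forall>(x,t)\<in>Qcyl \<Omega> T. u x t \<ge> 0"
    and sub: "cball x0 \<rho> \<subseteq> \<Omega>" and T: "T > 0"
    and blow: "\<forall>M. eventually (\<lambda>t. \<forall>x \<in> ball x0 \<rho>. u x t \<ge> M) (at_right 0)"
  shows "\<forall>x \<in> ball x0 (\<rho>/2). Liminf (at_right 0) (\<lambda>t. ereal (t powr (1/(q-1)) * u x t))
           \<ge> ereal (amplitude q \<rho> * (3/4 * \<rho>\<^sup>2) powr (q/(q-1)))"
    and "Liminf (at_right 0) (\<lambda>t. ereal (t powr (1/(q-1)) * u x0 t))
           \<ge> ereal (blowup_constant q * \<rho> powr (q/(q-1)))"
proof -
  have A: "admissible q \<rho> (amplitude q \<rho>)" by (rule amplitude_admissible[OF q \<rho>])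
  then have A0: "amplitude q \<rho> \<ge> 0" by (simp add: admissible_def)
  have liminf: "Liminf (at_right 0) (\<lambda>t. ereal (t powr (1/(q-1)) * u x t))
      \<ge> ereal (barrier q \<rho> (amplitude q \<rho>) x0 x)" if "x \<in> ball x0 \<rho>" for x
    using liminf_barrier_bound[OF sol nonneg sub q \<rho> A T blow] that by simp
  show "\<forall>x \<in> ball x0 (\<rho>/2). Liminf (at_right 0) (\<lambda>t. ereal (t powr (1/(q-1)) * u x t))
           \<ge> ereal (amplitude q \<rho> * (3/4 * \<rho>\<^sup>2) powr (q/(q-1)))"
  proof
    fix x assume x: "x \<in> ball x0 (\<rho>/2)"
    then have "x \<in> ball x0 \<rho>" using \<rho> by auto
    then show "Liminf (at_right 0) (\<lambda>t. ereal (t powr (1/(q-1)) * u x t))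
           \<ge> ereal (amplitude q \<rho> * (3/4 * \<rho>\<^sup>2) powr (q/(q-1)))"
      using liminf barrier_inner_bound[OF q A0 x] by (meson ereal_less_eq(3) order.trans)
  qed
  show "Liminf (at_right 0) (\<lambda>t. ereal (t powr (1/(q-1)) * u x0 t))
           \<ge> ereal (blowup_constant q * \<rho> powr (q/(q-1)))"
    using liminf[of x0] \<rho> by (simp add: barrier_center_value)
qed

(* The theorem: the constant on B(x0,\<rho>/2) is A (3\<rho>^2/4)^b, independent of the
   domain, the solution and the centre. *)
theorem proposition3p5:
  fixes q \<rho> :: real
  assumes "q > 1" and "\<rho> > 0"
  shows "\<exists>C > 0. \<forall>(\<Omega> :: (real^'n::finite) set) (T :: ereal) (u :: real^'n \<Rightarrow> real \<Rightarrow> real) (x0 :: real^'n).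
    open \<Omega> \<and> connected \<Omega> \<and> T > 0 \<and>
    classical_solution_E q \<Omega> T u \<and>
    (\<forall>(x,t) \<in> Qcyl \<Omega> T. u x t \<ge> 0) \<and>
    cball x0 \<rho> \<subseteq> \<Omega> \<and>
    (\<forall>M. eventually (\<lambda>t. \<forall>x \<in> ball x0 \<rho>. u x t \<ge> M) (at_right 0))
    \<longrightarrow>
    (\<forall>x \<in> ball x0 (\<rho>/2).
       Liminf (at_right 0) (\<lambda>t. ereal (t powr (1/(q-1)) * u x t)) \<ge> ereal C) \<and>
    Liminf (at_right 0) (\<lambda>t. ereal (t powr (1/(q-1)) * u x0 t))
      \<ge> ereal (((((q/(q-1)) * (1 + q/(q-1))) powr q * (q-1)) powr (-(1/(q-1)))) * \<rho> powr (q/(q-1)))"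
proof -
  have "amplitude q \<rho> * (3/4 * \<rho>\<^sup>2) powr (q/(q-1)) > 0"
    using amplitude_admissible[OF assms] assms(2) by (simp add: admissible_def)
  then show ?thesis
    using blowup_rate_bounds[OF assms] unfolding blowup_constant_def by blast
qed

end
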